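(* Let $\psi\in\mathcal H$ be a normalized eigenvector of $U_\Bbbk$, $U_\Bbbk\psi=e^{i\theta}\psi$, let $\Psi_\Bbbk=(\psi,\bar UP_{[\![1]\!]}\psi)/\Gamma^{1/2}$ with $\Gamma=1+\langle\psi,P_{[\![1]\!]}\psi\rangle$, and let $\bar\mu_\Bbbk([\![\mathrm y]\!])=\langle\Psi_\Bbbk,\widetilde P_{[\![\mathrm y]\!]}\Psi_\Bbbk\rangle$. Then for every integer $1\leq n<\Bbbk-1$, $$\frac1n h_n(\bar\mu_\Bbbk)\geq\frac1{\Bbbk-1}h_{\Bbbk-1}(\bar\mu_\Bbbk)-\frac{n\log2}{\Bbbk-1}.$$
   Context: Let $\Bbbk\geq3$ and $\mathcal H=(\mathbb C^2)^{\otimes\Bbbk}$ with orthonormal basis $|\mathrm x\rangle=|\mathrm x_1\rangle\otimes\cdots\otimes|\mathrm x_\Bbbk\rangle$, $\mathrm x_i\in\{0,1\}$. For a binary word $\mathrm w$ of length $m\leq\Bbbk$, $P_{[\![\mathrm w]\!]}$ is the orthogonal projection onto the span of the $|\mathrm x\rangle$ whose first $m$ digits equal $\mathrm w$. Let $\mathbf U$ be a $2\times2$ unitary with all entries of modulus $2^{-1/2}$, $\bar U|\mathrm x\rangle=|\mathrm x_2\rangle\otimes\cdots\otimes|\mathrm x_\Bbbk\rangle\otimes\mathbf U|\mathrm x_1\rangle$, $\sigma$ the unitary exchanging the last two tensor factors, and $P'_{[\![j]\!]}=\bar UP_{[\![j]\!]}\bar U^*$. Let $U_\Bbbk=\bar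 UP_{[\![0]\!]}+\sigma\bar U^2P_{[\![1]\!]}$, i.e. $U_\Bbbk|\mathrm x\rangle=|\mathrm x_2\rangle\otimes\cdots\otimes|\mathrm x_\Bbbk\rangle\otimes\mathbf U|\mathrm x_1\rangle$ if $\mathrm x_1=0$ and $U_\Bbbk|\mathrm x\rangle=|\mathrm x_3\rangle\otimes\cdots\otimes|\mathrm x_\Bbbk\rangle\otimes\mathbf U|\mathrm x_2\rangle\otimes\mathbf U|\mathrm x_1\rangle$ if $\mathrm x_1=1$. Tower space $\widetilde{\mathcal H}=\mathcal H\oplus P'_{[\![1]\!]}\mathcal H$ with direct-sum scalar product. For a binary word $\mathrm y$ of length $n\leq\Bbbk-1$, $\widetilde P_{[\![\mathrm y]\!]}=P_{[\![\mathrm y]\!]}\oplus P'_{[\![1]\!]}P_{[\![\mathrm y]\!]}$, and $h_n(\bar\mu_\Bbbk)=-\sum_{|\mathrm y|=n}\bar\mu_\Bbbk([\![\mathrm y]\!])\log\bar\mu_\Bbbk([\![\mathrm y]\!])$ (with $0\log0=0$). *)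

theory Defs
  imports Complex_Main
begin

text \<open>Basis vectors |x> of (C^2)^{\<otimes>k} are indexed by binary words x (bool lists,
  True = 1, False = 0) of length k.  Vectors are functions from words to complex numbers,
  operators are given by their matrix kernels K y x = <y|K|x>.\<close>

definition words :: "nat \<Rightarrow> bool list set" where
  "words k = {xs. length xs = k}"

type_synonym vec = "bool list \<Rightarrow> complex"
type_synonym ker = "bool list \<Rightarrow> bool list \<Rightarrow> complex"

definition inner_k :: "nat \<Rightarrow> vec \<Rightarrow> vec \<Rightarrow> complex" where
  "inner_k k \<phi> \<psi> = (\<Sum>x\<in>words k. cnj (\<phi> x) * \<psi> x)"

definition app :: "nat \<Rightarrow> ker \<Rightarrow> vec \<Rightarrow> vec" where
  "app k A \<psi> = (\<lambda>y. \<Sum>x\<in>words k. A y x * \<psi> x)"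

definition kmul :: "nat \<Rightarrow> ker \<Rightarrow> ker \<Rightarrow> ker" where
  "kmul k A B = (\<lambda>y x. \<Sum>z\<in>words k. A y z * B z x)"

definition kadj :: "ker \<Rightarrow> ker" where
  "kadj A = (\<lambda>y x. cnj (A x y))"

definition kadd :: "ker \<Rightarrow> ker \<Rightarrow> ker" where
  "kadd A B = (\<lambda>y x. A y x + B y x)"

definition proj :: "bool list \<Rightarrow> ker" where
  "proj w = (\<lambda>y x. if y = x \<and> take (length w) x = w then 1 else 0)"

text \<open>A 2x2 matrix u, with u i j = <i|u|j>.\<close>
definition unitary2 :: "(bool \<Rightarrow> bool \<Rightarrow> complex) \<Rightarrow> bool" where
  "unitary2 u \<longleftrightarrow> (\<forall>i j. (\<Sum>l\<in>UNIV. cnj (u l i) * u l j) = (if i = j then 1 else 0))"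

text \<open>Ubar |x> = |x_2 ... x_k> \<otimes> U|x_1>.\<close>
definition Ubar :: "(bool \<Rightarrow> bool \<Rightarrow> complex) \<Rightarrow> ker" where
  "Ubar u = (\<lambda>y x. if butlast y = tl x then u (last y) (hd x) else 0)"

definition swap_last2 :: "bool list \<Rightarrow> bool list" where
  "swap_last2 x = take (length x - 2) x @ [x ! (length x - 1), x ! (length x - 2)]"

definition sigma :: ker where
  "sigma = (\<lambda>y x. if y = swap_last2 x then 1 else 0)"

definition Uk :: "nat \<Rightarrow> (bool \<Rightarrow> bool \<Rightarrow> complex) \<Rightarrow> ker" where
  "Uk k u = kadd (kmul k (Ubar u) (proj [False]))
                 (kmul k sigma (kmul k (Ubar u) (kmul k (Ubar u) (proj [True]))))"

definition Pprime1 :: "nat \<Rightarrow> (bool \<Rightarrow> bool \<Rightarrow> complex) \<Rightarrow> ker" where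
  "Pprime1 k u = kmul k (Ubar u) (kmul k (proj [True]) (kadj (Ubar u)))"

definition Gamma :: "nat \<Rightarrow> vec \<Rightarrow> complex" where
  "Gamma k \<psi> = 1 + inner_k k \<psi> (app k (proj [True]) \<psi>)"

text \<open>Tower vector Psi = (psi, Ubar P_[1] psi) / Gamma^{1/2}; mu([y]) = <Psi, Ptilde_[y] Psi>
  with Ptilde_[y] = P_[y] \<oplus> P'_[1] P_[y] and the direct-sum scalar product.\<close>
definition Psi1 :: "nat \<Rightarrow> vec \<Rightarrow> vec" where
  "Psi1 k \<psi> = (\<lambda>x. \<psi> x / csqrt (Gamma k \<psi>))"

definition Psi2 :: "nat \<Rightarrow> (bool \<Rightarrow> bool \<Rightarrow> complex) \<Rightarrow> vec \<Rightarrow> vec" where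
  "Psi2 k u \<psi> = (\<lambda>x. app k (kmul k (Ubar u) (proj [True])) \<psi> x / csqrt (Gamma k \<psi>))"

definition mu_bar :: "nat \<Rightarrow> (bool \<Rightarrow> bool \<Rightarrow> complex) \<Rightarrow> vec \<Rightarrow> bool list \<Rightarrow> real" where
  "mu_bar k u \<psi> y = Re (inner_k k (Psi1 k \<psi>) (app k (proj y) (Psi1 k \<psi>))
      + inner_k k (Psi2 k u \<psi>) (app k (kmul k (Pprime1 k u) (proj y)) (Psi2 k u \<psi>)))"

definition entr :: "(bool list \<Rightarrow> real) \<Rightarrow> nat \<Rightarrow> real" where
  "entr m n = - (\<Sum>y\<in>words n. if m y = 0 then 0 else m y * ln (m y))"

end

theory Submission
  imports Defs
begin

text \<open>Let \<open>N(w)\<close> be the \<open>|\<psi>|\<^sup>2\<close>-mass of the cylinder \<open>[w]\<close>. Then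
  \<open>\<mu>\<^sub>k([w]) = (N(w) + N(1w)) / (1 + N(1))\<close>, and these numbers form a consistent family of
  probability vectors on the words of length \<open>\<le> k - 1\<close>. The eigenvector equation says that
  \<open>U\<^sub>k\<close> acts on the first two digits of \<open>\<psi>\<close> through the unitary \<open>U\<close>, which yields
  \<open>N(w) = N(0w) + N(10w) + N(11w)\<close> and hence stationarity \<open>\<mu>([w]) = \<mu>([0w]) + \<mu>([1w])\<close>.
  For a stationary family Gibbs' inequality makes the block entropies subadditive, so writing
  \<open>k - 1 = j n + r\<close> with \<open>r < n\<close> gives \<open>h\<^sub>k\<^sub>-\<^sub>1 \<le> j h\<^sub>n + r log 2\<close>, which is the claim.\<close>

lemma finite_words [simp]: "finite (words n)"
proof -
  have "words n = {xs. set xs \<subseteq> UNIV \<and> length xs = n}" by (auto simp: words_def)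
  thus ?thesis using finite_lists_length_eq[of "UNIV::bool set" n] by simp
qed

lemma mem_words [simp]: "x \<in> words n \<longleftrightarrow> length x = n"
  by (simp add: words_def)

lemma words_0: "words 0 = {[]}"
  by (auto simp: words_def)

lemma words_Suc: "words (Suc n) = Cons False ` words n \<union> Cons True ` words n"
  by (auto simp: words_def image_iff length_Suc_conv)

lemma sum_words_Suc:
  "(\<Sum>x\<in>words (Suc n). f x) = (\<Sum>z\<in>words n. f (False # z)) + (\<Sum>z\<in>words n. f (True # z))"
  unfolding words_Suc by (subst sum.union_disjoint) (auto simp: sum.reindex)

lemma sum_words_append:
  "(\<Sum>x\<in>words (a + b). f x) = (\<Sum>x\<in>words a. \<Sum>y\<in>words b. f (x @ y))"
proof (induction a arbitrary: f)
  case 0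
  thus ?case by (simp add: words_0)
next
  case (Suc a)
  show ?case using Suc[of "\<lambda>x. f (False # x)"] Suc[of "\<lambda>x. f (True # x)"]
    by (simp add: sum_words_Suc)
qed

lemma sum_words_1: "(\<Sum>y\<in>words 1. f y) = f [False] + f [True]"
  using sum_words_Suc[where n=0] by (simp add: words_0)

lemma sum_words_2:
  "(\<Sum>y\<in>words 2. f y) = f [False, False] + f [False, True] + f [True, False] + f [True, True]"
  using sum_words_Suc[of f 1] sum_words_1[of "\<lambda>z. f (False # z)"] sum_words_1[of "\<lambda>z. f (True # z)"]
  by (simp add: numeral_2_eq_2 add.assoc)

lemma sum_words_snoc:
  "(\<Sum>x\<in>words (Suc n). f x) = (\<Sum>z\<in>words n. f (z @ [False]) + f (z @ [True]))"
  using sum_words_append[where a=n and b=1] by (simp add: sum_words_1[unfolded One_nat_def])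

lemma card_words: "card (words n) = 2 ^ n"
  using card_lists_length_eq[of "UNIV::bool set" n] by (simp add: words_def)

lemma entr_eq: "entr m n = - (\<Sum>y\<in>words n. m y * ln (m y))"
  unfolding entr_def by (intro arg_cong[where f=uminus] sum.cong) auto

section \<open>Entropy of stationary word measures\<close>

lemma gibbs_inequality:
  fixes p q :: "'a \<Rightarrow> real"
  assumes "finite S" "\<And>i. i \<in> S \<Longrightarrow> 0 \<le> p i" "\<And>i. i \<in> S \<Longrightarrow> 0 \<le> q i"
    and "\<And>i. i \<in> S \<Longrightarrow> 0 < p i \<Longrightarrow> 0 < q i" and "sum p S = 1" "sum q S \<le> 1"
  shows "(\<Sum>i\<in>S. p i * ln (q i)) \<le> (\<Sum>i\<in>S. p i * ln (p i))"
proof -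
  have "p i * ln (q i) - p i * ln (p i) \<le> q i - p i" if i: "i \<in> S" for i
  proof (cases "p i = 0")
    case True
    thus ?thesis using assms(3)[OF i] by simp
  next
    case False
    hence p: "0 < p i" and q: "0 < q i" using assms(2,4)[OF i] by auto
    have "p i * ln (q i / p i) \<le> p i * (q i / p i - 1)"
      using ln_le_minus_one[of "q i / p i"] p q by (simp add: mult_left_mono)
    also have "\<dots> = q i - p i"
      using p by (simp add: field_simps)
    finally show ?thesis
      using p q by (simp add: ln_div right_diff_distrib)
  qed
  hence "(\<Sum>i\<in>S. p i * ln (q i) - p i * ln (p i)) \<le> (\<Sum>i\<in>S. q i - p i)"
    by (rule sum_mono)
  thus ?thesis using assms(5,6) by (simp add: sum_subtractf)
qed

locale stationary_word_measure =
  fixes K :: nat and \<mu> :: "bool list \<Rightarrow> real"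
  assumes nonneg: "length w \<le> K \<Longrightarrow> 0 \<le> \<mu> w"
    and Nil: "\<mu> [] = 1"
    and extend_right: "length w < K \<Longrightarrow> \<mu> w = \<mu> (w @ [False]) + \<mu> (w @ [True])"
    and extend_left: "length w < K \<Longrightarrow> \<mu> w = \<mu> (False # w) + \<mu> (True # w)"
begin

lemma sum_extensions_right:
  assumes "length x + b \<le> K"
  shows "(\<Sum>y\<in>words b. \<mu> (x @ y)) = \<mu> x"
  using assms
proof (induction b)
  case 0
  thus ?case by (simp add: words_0)
next
  case (Suc b)
  have "(\<Sum>y\<in>words (Suc b). \<mu> (x @ y)) = (\<Sum>z\<in>words b. \<mu> (x @ z @ [False]) + \<mu> (x @ z @ [True]))"
    by (simp add: sum_words_snoc)
  also have "\<dots> = (\<Sum>z\<in>words b. \<mu> (x @ z))"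
    using Suc.prems by (intro sum.cong refl) (simp add: extend_right[of "x @ z" for z])
  finally show ?case using Suc by simp
qed

lemma sum_extensions_left:
  assumes "a + length y \<le> K"
  shows "(\<Sum>x\<in>words a. \<mu> (x @ y)) = \<mu> y"
  using assms
proof (induction a)
  case 0
  thus ?case by (simp add: words_0)
next
  case (Suc a)
  have "(\<Sum>x\<in>words (Suc a). \<mu> (x @ y)) = (\<Sum>z\<in>words a. \<mu> (False # z @ y) + \<mu> (True # z @ y))"
    by (simp add: sum_words_Suc sum.distrib)
  also have "\<dots> = (\<Sum>z\<in>words a. \<mu> (z @ y))"
    using Suc.prems by (intro sum.cong refl) (simp add: extend_left[of "z @ y" for z])
  finally show ?case using Suc by simp
qed

lemma sum_words_eq_1: "m \<le> K \<Longrightarrow> (\<Sum>w\<in>words m. \<mu> w) = 1"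
  using sum_extensions_left[of m "[]"] by (simp add: Nil)

lemma append_le_left:
  assumes "length x + length y \<le> K"
  shows "\<mu> (x @ y) \<le> \<mu> x"
proof -
  have "\<mu> (x @ y) \<le> (\<Sum>y'\<in>words (length y). \<mu> (x @ y'))"
    using assms by (intro member_le_sum) (auto simp: nonneg)
  thus ?thesis using sum_extensions_right[OF assms] by simp
qed

lemma append_le_right:
  assumes "length x + length y \<le> K"
  shows "\<mu> (x @ y) \<le> \<mu> y"
proof -
  have "\<mu> (x @ y) \<le> (\<Sum>x'\<in>words (length x). \<mu> (x' @ y))"
    using assms by (intro member_le_sum) (auto simp: nonneg)
  thus ?thesis using sum_extensions_left[OF assms] by simp
qed

lemma le_1: "length w \<le> K \<Longrightarrow> \<mu> w \<le> 1"
  using append_le_right[of w "[]"] by (simp add: Nil)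

lemma entr_nonneg:
  assumes "m \<le> K"
  shows "0 \<le> entr \<mu> m"
proof -
  have "\<mu> w * ln (\<mu> w) \<le> 0" if "w \<in> words m" for w
    using that assms nonneg[of w] le_1[of w]
    by (cases "\<mu> w = 0") (auto intro!: mult_nonneg_nonpos)
  hence "(\<Sum>w\<in>words m. \<mu> w * ln (\<mu> w)) \<le> 0"
    by (rule sum_nonpos)
  thus ?thesis
    by (simp add: entr_eq)
qed

lemma entr_subadditive:
  assumes ab: "a + b \<le> K"
  shows "entr \<mu> (a + b) \<le> entr \<mu> a + entr \<mu> b"
proof -
  let ?S = "words a \<times> words b"
  define p where "p = (\<lambda>(x, y). \<mu> (x @ y))"
  define q where "q = (\<lambda>(x, y). \<mu> x * \<mu> y)"
  have len: "length x + length y \<le> K" if "(x, y) \<in> ?S" for x y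
    using that ab by simp
  have factors_pos: "0 < \<mu> x" "0 < \<mu> y" if "(x, y) \<in> ?S" "0 < \<mu> (x @ y)" for x y
    using append_le_left[OF len[OF that(1)]] append_le_right[OF len[OF that(1)]] that(2) by linarith+
  have "(\<Sum>i\<in>?S. p i * ln (q i)) \<le> (\<Sum>i\<in>?S. p i * ln (p i))"
  proof (rule gibbs_inequality)
    have "sum p ?S = (\<Sum>x\<in>words a. \<Sum>y\<in>words b. \<mu> (x @ y))"
      by (simp add: p_def sum.cartesian_product)
    also have "\<dots> = (\<Sum>x\<in>words a. \<mu> x)"
      using ab by (intro sum.cong refl sum_extensions_right) simp
    finally show "sum p ?S = 1"
      using ab by (simp add: sum_words_eq_1)
    show "sum q ?S \<le> 1"
      using ab by (simp add: q_def sum.cartesian_product[symmetric] sum_product[symmetric] sum_words_eq_1)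
  qed (use ab len factors_pos in \<open>auto simp: p_def q_def intro!: nonneg mult_nonneg_nonneg\<close>)
  moreover have "(\<Sum>i\<in>?S. p i * ln (p i)) = - entr \<mu> (a + b)"
    by (simp add: entr_eq sum_words_append p_def sum.cartesian_product split_def)
  moreover have "(\<Sum>i\<in>?S. p i * ln (q i)) = - entr \<mu> a - entr \<mu> b"
  proof -
    have "p (x, y) * ln (q (x, y)) = \<mu> (x @ y) * ln (\<mu> x) + \<mu> (x @ y) * ln (\<mu> y)"
      if "(x, y) \<in> ?S" for x y
      using factors_pos[OF that] nonneg[of "x @ y"] len[OF that]
      by (cases "\<mu> (x @ y) = 0") (auto simp: p_def q_def ln_mult distrib_left)
    hence "(\<Sum>i\<in>?S. p i * ln (q i))
        = (\<Sum>x\<in>words a. \<Sum>y\<in>words b. \<mu> (x @ y) * ln (\<mu> x) + \<mu> (x @ y) * ln (\<mu> y))"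
      by (subst sum.cartesian_product) (rule sum.cong, auto)
    also have "\<dots> = (\<Sum>x\<in>words a. \<Sum>y\<in>words b. \<mu> (x @ y) * ln (\<mu> x))
        + (\<Sum>y\<in>words b. \<Sum>x\<in>words a. \<mu> (x @ y) * ln (\<mu> y))"
      by (simp add: sum.distrib sum.swap[of _ "words a"])
    also have "\<dots> = (\<Sum>x\<in>words a. \<mu> x * ln (\<mu> x)) + (\<Sum>y\<in>words b. \<mu> y * ln (\<mu> y))"
      using ab sum_extensions_right[of _ b] sum_extensions_left[of a]
      by (simp add: sum_distrib_right[symmetric])
    finally show ?thesis by (simp add: entr_eq)
  qed
  ultimately show ?thesis by linarith
qed

lemma entr_1_le_ln2:
  assumes "1 \<le> K"
  shows "entr \<mu> 1 \<le> ln 2"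
proof -
  have "(\<Sum>w\<in>words 1. \<mu> w * ln (1 / 2)) \<le> (\<Sum>w\<in>words 1. \<mu> w * ln (\<mu> w))"
    using assms by (intro gibbs_inequality) (auto simp: card_words nonneg sum_words_eq_1)
  moreover have "(\<Sum>w\<in>words 1. \<mu> w * ln (1 / 2)) = - ln 2"
    using assms sum_words_eq_1[of 1] by (simp add: ln_div sum_negf flip: sum_distrib_right)
  ultimately show ?thesis by (simp add: entr_eq)
qed

lemma entr_le_length_ln2: "m \<le> K \<Longrightarrow> entr \<mu> m \<le> real m * ln 2"
proof (induction m)
  case 0
  thus ?case by (simp add: entr_eq words_0 Nil)
next
  case (Suc m)
  thus ?case
    using entr_subadditive[of 1 m] entr_1_le_ln2 by (simp add: algebra_simps)
qed

lemma entr_mult_add_le: "j * n + r \<le> K \<Longrightarrow> entr \<mu> (j * n + r) \<le> real j * entr \<mu> n + entr \<mu> r"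
proof (induction j)
  case 0
  thus ?case by simp
next
  case (Suc j)
  thus ?case
    using entr_subadditive[of n "j * n + r"] by (simp add: add.assoc algebra_simps)
qed

lemma entropy_rate_bound:
  assumes n: "1 \<le> n" "n \<le> K"
  shows "entr \<mu> K / real K - real n * ln 2 / real K \<le> entr \<mu> n / real n"
proof -
  define j r where "j = K div n" and "r = K mod n"
  have K: "K = j * n + r" and "r < n"
    using n by (simp_all add: j_def r_def)
  have "real r * ln 2 \<le> real n * ln 2"
    using \<open>r < n\<close> by (intro mult_right_mono) auto
  moreover have "entr \<mu> K \<le> real j * entr \<mu> n + entr \<mu> r" "entr \<mu> r \<le> real r * ln 2"
    using entr_mult_add_le[of j n r] entr_le_length_ln2[of r] K by simp_all
  ultimately have "entr \<mu> K \<le> real j * entr \<mu> n + real n * ln 2"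
    by linarith
  hence "entr \<mu> K * real n \<le> (real j * entr \<mu> n + real n * ln 2) * real n"
    by (rule mult_right_mono) simp
  also have "\<dots> = real j * real n * entr \<mu> n + real n * ln 2 * real n"
    by (simp add: algebra_simps)
  also have "\<dots> \<le> real K * entr \<mu> n + real n * ln 2 * real n"
    using K entr_nonneg[OF n(2)] by (simp add: mult_right_mono)
  finally have "entr \<mu> K * real n \<le> real K * entr \<mu> n + real n * ln 2 * real n" .
  thus ?thesis
    using n by (simp add: field_simps)
qed

end

section \<open>Matrix kernels on words\<close>

lemma app_kmul: "app k (kmul k A B) v = app k A (app k B v)"
  unfolding app_def kmul_def
  by (rule ext) (simp add: sum_distrib_left sum_distrib_right mult.assoc, rule sum.swap)

lemma app_kadd: "app k (kadd A B) v y = app k A v y + app k B v y"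
  unfolding app_def kadd_def by (simp add: distrib_right sum.distrib)

lemma app_proj:
  assumes "y \<in> words k"
  shows "app k (proj w) v y = (if take (length w) y = w then v y else 0)"
proof -
  have "app k (proj w) v y = (\<Sum>x\<in>words k. if y = x then (if take (length w) y = w then v y else 0) else 0)"
    unfolding app_def proj_def by (rule sum.cong) auto
  thus ?thesis using assms by simp
qed

lemma sum_delta_mult:
  assumes "finite A" "z0 \<in> A"
  shows "(\<Sum>z\<in>A. (if z0 = z then a z else 0) * b z) = a z0 * (b z0 :: complex)"
proof -
  have "(\<Sum>z\<in>A. (if z0 = z then a z else 0) * b z) = (\<Sum>z\<in>A. if z0 = z then a z * b z else 0)"
    by (rule sum.cong) auto
  thus ?thesis using assms by simp
qed

lemma app_Ubar:
  assumes "y \<in> words (Suc k)"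
  shows "app (Suc k) (Ubar u) v y
    = u (last y) False * v (False # butlast y) + u (last y) True * v (True # butlast y)"
  using assms unfolding app_def Ubar_def sum_words_Suc
  by (simp add: sum_delta_mult)

lemma app_kadj_Ubar:
  assumes "y \<in> words (Suc k)"
  shows "app (Suc k) (kadj (Ubar u)) v y
    = cnj (u False (hd y)) * v (tl y @ [False]) + cnj (u True (hd y)) * v (tl y @ [True])"
proof -
  have "tl y \<in> words k"
    using assms by simp
  moreover have "app (Suc k) (kadj (Ubar u)) v y
    = (\<Sum>z\<in>words k. (if tl y = z then cnj (u False (hd y)) else 0) * v (z @ [False])) +
      (\<Sum>z\<in>words k. (if tl y = z then cnj (u True (hd y)) else 0) * v (z @ [True]))"
    unfolding app_def Ubar_def kadj_def sum_words_snoc sum.distrib[symmetric]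
    by (rule sum.cong) auto
  ultimately show ?thesis
    by (simp add: sum_delta_mult)
qed

lemma swap_last2_snoc2 [simp]: "swap_last2 (z @ [a, b]) = z @ [b, a]"
  unfolding swap_last2_def by (simp add: nth_append)

lemma snoc2_eq_iff: "xs @ [a, b] = ys @ [c, d] \<longleftrightarrow> xs = ys \<and> a = c \<and> b = d"
  using append1_eq_conv[of "xs @ [a]" b "ys @ [c]" d] by auto

lemma snoc2_cases:
  assumes "length x = Suc (Suc k)"
  obtains x' a b where "x = x' @ [a, b]"
proof -
  obtain x1 b where x1: "x = x1 @ [b]" and "length x1 = Suc k"
    using assms by (cases x rule: rev_cases) auto
  then obtain x' a where "x1 = x' @ [a]"
    by (cases x1 rule: rev_cases) auto
  thus ?thesis using that x1 by simp
qed

lemma app_sigma: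
  assumes "z \<in> words k"
  shows "app (Suc (Suc k)) sigma v (z @ [c, d]) = v (z @ [d, c])"
proof -
  have "app (Suc (Suc k)) sigma v (z @ [c, d])
      = (\<Sum>x\<in>words (Suc (Suc k)). if z @ [d, c] = x then v x else 0)"
    unfolding app_def sigma_def
  proof (rule sum.cong[OF refl])
    fix x assume "x \<in> words (Suc (Suc k))"
    then obtain x' a b where "x = x' @ [a, b]"
      using snoc2_cases[of x k] by auto
    thus "(if z @ [c, d] = swap_last2 x then 1 else 0) * v x = (if z @ [d, c] = x then v x else 0)"
      by (auto simp: snoc2_eq_iff)
  qed
  thus ?thesis using assms by simp
qed

lemma app_Uk_snoc2:
  assumes "z \<in> words k"
  shows "app (Suc (Suc k)) (Uk (Suc (Suc k)) u) \<psi> (z @ [c, d])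
    = u d False * \<psi> (False # z @ [c])
      + u d True * (u c False * \<psi> (True # False # z) + u c True * \<psi> (True # True # z))"
proof -
  have m: "z @ [c, d] \<in> words (Suc (Suc k))" "z @ [d, c] \<in> words (Suc (Suc k))"
    "\<And>b e. b # z @ [e] \<in> words (Suc (Suc k))" "\<And>a b. a # b # z \<in> words (Suc (Suc k))"
    using assms by auto
  show ?thesis
    unfolding Uk_def app_kadd app_kmul app_sigma[OF assms] app_Ubar[OF m(1)] app_Ubar[OF m(2)]
    using m by (simp add: app_proj butlast_append algebra_simps app_Ubar[OF m(3)])
qed

lemma unitary2_orthonormal:
  assumes "unitary2 u"
  shows "cnj (u False False) * u False False + cnj (u True False) * u True False = 1"
    and "cnj (u False True) * u False True + cnj (u True True) * u True True = 1"
    and "cnj (u False False) * u False True + cnj (u True False) * u True True = 0"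
    and "cnj (u False True) * u False False + cnj (u True True) * u True False = 0"
  using assms unfolding unitary2_def
  by (auto simp: UNIV_bool dest: spec[of _ False] spec[of _ True])

lemma of_real_cmod_sq: "complex_of_real ((cmod z)\<^sup>2) = cnj z * z"
  using complex_norm_square[of z] by (simp add: mult.commute)

lemma unitary2_norm_preserving:
  assumes "unitary2 u"
  shows "(cmod (u False False * a + u False True * b))\<^sup>2 + (cmod (u True False * a + u True True * b))\<^sup>2
       = (cmod a)\<^sup>2 + (cmod b)\<^sup>2"
proof -
  note e = unitary2_orthonormal[OF assms]
  have "cnj (u False False * a + u False True * b) * (u False False * a + u False True * b)
      + cnj (u True False * a + u True True * b) * (u True False * a + u True True * b)
      = cnj a * a * (cnj (u False False) * u False False + cnj (u True False) * u True False)
      + cnj b * b * (cnj (u False True) * u False True + cnj (u True True) * u True True)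
      + cnj a * b * (cnj (u False False) * u False True + cnj (u True False) * u True True)
      + cnj b * a * (cnj (u False True) * u False False + cnj (u True True) * u True False)"
    by (simp add: algebra_simps)
  also have "\<dots> = cnj a * a + cnj b * b"
    using e by simp
  finally have "complex_of_real ((cmod (u False False * a + u False True * b))\<^sup>2
      + (cmod (u True False * a + u True True * b))\<^sup>2) = complex_of_real ((cmod a)\<^sup>2 + (cmod b)\<^sup>2)"
    by (simp only: of_real_add of_real_cmod_sq)
  thus ?thesis
    using of_real_eq_iff by blast
qed

lemma unitary2_column_norm:
  assumes "unitary2 u"
  shows "(cmod (u False j))\<^sup>2 + (cmod (u True j))\<^sup>2 = 1"
  using unitary2_norm_preserving[OF assms, of "of_bool (\<not> j)" "of_bool j"] by (cases j) simp_all

section \<open>The tower measure\<close>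

definition cylinder_mass :: "nat \<Rightarrow> vec \<Rightarrow> bool list \<Rightarrow> real" where
  "cylinder_mass k v w = (\<Sum>x\<in>words k. if take (length w) x = w then (cmod (v x))\<^sup>2 else 0)"

lemma cylinder_mass_nonneg: "0 \<le> cylinder_mass k v w"
  unfolding cylinder_mass_def by (rule sum_nonneg) auto

lemma cylinder_mass_Cons: "cylinder_mass (Suc k) v (b # w) = cylinder_mass k (\<lambda>z. v (b # z)) w"
  unfolding cylinder_mass_def sum_words_Suc by (induct b) simp_all

lemma cylinder_mass_split:
  assumes "length w < k"
  shows "cylinder_mass k v w = cylinder_mass k v (w @ [False]) + cylinder_mass k v (w @ [True])"
  unfolding cylinder_mass_def sum.distrib[symmetric]
proof (rule sum.cong[OF refl])
  fix x assume "x \<in> words k"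
  hence "take (Suc (length w)) x = take (length w) x @ [x ! length w]"
    using assms by (simp add: take_Suc_conv_app_nth)
  thus "(if take (length w) x = w then (cmod (v x))\<^sup>2 else 0) =
      (if take (length (w @ [False])) x = w @ [False] then (cmod (v x))\<^sup>2 else 0) +
      (if take (length (w @ [True])) x = w @ [True] then (cmod (v x))\<^sup>2 else 0)"
    by (cases "x ! length w") auto
qed

lemma cylinder_mass_append:
  assumes "length w \<le> k"
  shows "cylinder_mass (k + m) v w
    = (\<Sum>z\<in>words k. if take (length w) z = w then \<Sum>y\<in>words m. (cmod (v (z @ y)))\<^sup>2 else 0)"
  unfolding cylinder_mass_def sum_words_append using assms
  by (intro sum.cong refl) simp

lemma cylinder_mass_divide:
  "cylinder_mass k (\<lambda>x. v x / c) w = cylinder_mass k v w / (cmod c)\<^sup>2"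
  unfolding cylinder_mass_def sum_divide_distrib
  by (intro sum.cong refl) (simp add: norm_divide power_divide)

lemma inner_proj_eq_cylinder_mass:
  "inner_k k v (app k (proj w) v) = complex_of_real (cylinder_mass k v w)"
  unfolding inner_k_def cylinder_mass_def of_real_sum
  by (rule sum.cong) (auto simp: app_proj of_real_cmod_sq simp del: of_real_power)

lemma Gamma_eq: "Gamma k \<psi> = complex_of_real (1 + cylinder_mass k \<psi> [True])"
  by (simp add: Gamma_def inner_proj_eq_cylinder_mass)

lemma cmod_csqrt_Gamma_sq: "(cmod (csqrt (Gamma k \<psi>)))\<^sup>2 = 1 + cylinder_mass k \<psi> [True]"
  using cylinder_mass_nonneg[of k \<psi> "[True]"] by (simp add: Gamma_eq)

lemma app_Ubar_proj1_snoc: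
  assumes "z \<in> words k"
  shows "app (Suc k) (kmul (Suc k) (Ubar u) (proj [True])) \<psi> (z @ [d]) = u d True * \<psi> (True # z)"
proof -
  have "z @ [d] \<in> words (Suc k)" "\<And>b. b # z \<in> words (Suc k)"
    using assms by auto
  thus ?thesis
    by (simp add: app_kmul app_Ubar app_proj)
qed

lemma cylinder_mass_Ubar_proj1:
  assumes "unitary2 u" and "length w \<le> k"
  shows "cylinder_mass (Suc k) (app (Suc k) (kmul (Suc k) (Ubar u) (proj [True])) \<psi>) w
    = cylinder_mass (Suc k) \<psi> (True # w)"
proof -
  have column: "(cmod (u False True * a))\<^sup>2 + (cmod (u True True * a))\<^sup>2 = (cmod a)\<^sup>2" for a
    using unitary2_column_norm[OF assms(1), of True]
    by (simp add: norm_mult power_mult_distrib flip: distrib_right)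
  have "cylinder_mass (Suc k) (app (Suc k) (kmul (Suc k) (Ubar u) (proj [True])) \<psi>) w
    = (\<Sum>z\<in>words k. (if take (length w) (z @ [False]) = w then (cmod (u False True * \<psi> (True # z)))\<^sup>2 else 0)
        + (if take (length w) (z @ [True]) = w then (cmod (u True True * \<psi> (True # z)))\<^sup>2 else 0))"
    unfolding cylinder_mass_def sum_words_snoc by (intro sum.cong refl) (simp add: app_Ubar_proj1_snoc)
  also have "\<dots> = (\<Sum>z\<in>words k. if take (length w) z = w then (cmod (\<psi> (True # z)))\<^sup>2 else 0)"
    using assms(2) by (intro sum.cong refl) (simp add: column)
  also have "\<dots> = cylinder_mass (Suc k) \<psi> (True # w)"
    by (simp only: cylinder_mass_Cons) (simp add: cylinder_mass_def)
  finally show ?thesis .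
qed

lemma Psi2_snoc:
  assumes "z \<in> words k"
  shows "Psi2 (Suc k) u \<psi> (z @ [d]) = u d True * \<psi> (True # z) / csqrt (Gamma (Suc k) \<psi>)"
  unfolding Psi2_def using assms by (simp add: app_Ubar_proj1_snoc)

text \<open>\<open>P'\<^sub>[\<^sub>1\<^sub>]\<close> acts on the last tensor factor only, so it commutes with \<open>P\<^sub>[\<^sub>w\<^sub>]\<close> for
  \<open>|w| < k\<close>, and it fixes \<open>\<Psi>\<^sub>2\<close>.\<close>
lemma app_Pprime1_proj_Psi2:
  assumes "unitary2 u" and "y \<in> words (Suc k)" and "length w \<le> k"
  shows "app (Suc k) (kmul (Suc k) (Pprime1 (Suc k) u) (proj w)) (Psi2 (Suc k) u \<psi>) y
    = app (Suc k) (proj w) (Psi2 (Suc k) u \<psi>) y"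
proof -
  obtain z d where y: "y = z @ [d]" and z: "z \<in> words k"
    using assms(2) by (cases y rule: rev_cases) auto
  have m: "z @ [d] \<in> words (Suc k)" "\<And>b. b # z \<in> words (Suc k)" "\<And>e. z @ [e] \<in> words (Suc k)"
    using z by auto
  have "length w - k = 0"
    using assms(3) by simp
  have "cnj (u False True) * (u False True * a) + cnj (u True True) * (u True True * a)
      = (cnj (u False True) * u False True + cnj (u True True) * u True True) * a" for a
    by (simp add: algebra_simps)
  hence "cnj (u False True) * (u False True * a) + cnj (u True True) * (u True True * a) = a" for a
    using unitary2_orthonormal(2)[OF assms(1)] by simp
  thus ?thesis
    unfolding y Pprime1_def app_kmul app_Ubar[OF m(1)]
    using m z by (simp add: app_proj app_kadj_Ubar Psi2_snoc \<open>length w - k = 0\<close> add_divide_distrib[symmetric])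
qed

lemma mu_bar_eq:
  assumes "unitary2 u" and "length w \<le> k"
  shows "mu_bar (Suc k) u \<psi> w = (cylinder_mass (Suc k) \<psi> w + cylinder_mass (Suc k) \<psi> (True # w))
      / (1 + cylinder_mass (Suc k) \<psi> [True])"
proof -
  have "inner_k (Suc k) (Psi2 (Suc k) u \<psi>)
      (app (Suc k) (kmul (Suc k) (Pprime1 (Suc k) u) (proj w)) (Psi2 (Suc k) u \<psi>))
    = inner_k (Suc k) (Psi2 (Suc k) u \<psi>) (app (Suc k) (proj w) (Psi2 (Suc k) u \<psi>))"
    unfolding inner_k_def using assms by (intro sum.cong refl) (simp add: app_Pprime1_proj_Psi2)
  also have "\<dots> = complex_of_real (cylinder_mass (Suc k) \<psi> (True # w) / (1 + cylinder_mass (Suc k) \<psi> [True]))"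
    unfolding inner_proj_eq_cylinder_mass Psi2_def cylinder_mass_divide cmod_csqrt_Gamma_sq
      cylinder_mass_Ubar_proj1[OF assms] ..
  finally show ?thesis
    unfolding mu_bar_def Psi1_def inner_proj_eq_cylinder_mass cylinder_mass_divide cmod_csqrt_Gamma_sq
    by (simp add: add_divide_distrib)
qed

section \<open>Stationarity from the eigenvector equation\<close>

lemma eigenvector_block_norm:
  assumes "unitary2 u" and z: "z \<in> words k" and "cmod \<omega> = 1"
    and eigen: "\<forall>y\<in>words (Suc (Suc k)). app (Suc (Suc k)) (Uk (Suc (Suc k)) u) \<psi> y = \<omega> * \<psi> y"
  shows "(\<Sum>y\<in>words 2. (cmod (\<psi> (z @ y)))\<^sup>2)
    = (\<Sum>y\<in>words 1. (cmod (\<psi> (False # z @ y)))\<^sup>2)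
      + (cmod (\<psi> (True # False # z)))\<^sup>2 + (cmod (\<psi> (True # True # z)))\<^sup>2"
proof -
  define b where "b c = u c False * \<psi> (True # False # z) + u c True * \<psi> (True # True # z)" for c
  have coord: "cmod (\<psi> (z @ [c, d])) = cmod (u d False * \<psi> (False # z @ [c]) + u d True * b c)" for c d
  proof -
    have "cmod (\<psi> (z @ [c, d])) = cmod (\<omega> * \<psi> (z @ [c, d]))"
      using assms(3) by (simp add: norm_mult)
    also have "\<omega> * \<psi> (z @ [c, d]) = app (Suc (Suc k)) (Uk (Suc (Suc k)) u) \<psi> (z @ [c, d])"
      using eigen z by simp
    finally show ?thesis
      unfolding app_Uk_snoc2[OF z] b_def .
  qed
  have pair: "(cmod (\<psi> (z @ [c, False])))\<^sup>2 + (cmod (\<psi> (z @ [c, True])))\<^sup>2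
      = (cmod (\<psi> (False # z @ [c])))\<^sup>2 + (cmod (b c))\<^sup>2" for c
    unfolding coord by (rule unitary2_norm_preserving[OF assms(1)])
  have "(cmod (b False))\<^sup>2 + (cmod (b True))\<^sup>2
      = (cmod (\<psi> (True # False # z)))\<^sup>2 + (cmod (\<psi> (True # True # z)))\<^sup>2"
    unfolding b_def by (rule unitary2_norm_preserving[OF assms(1)])
  thus ?thesis
    unfolding sum_words_2 sum_words_1 using pair[of False] pair[of True] by simp
qed

lemma cylinder_mass_eigenvector:
  assumes "unitary2 u" and "cmod \<omega> = 1"
    and eigen: "\<forall>y\<in>words (Suc (Suc k)). app (Suc (Suc k)) (Uk (Suc (Suc k)) u) \<psi> y = \<omega> * \<psi> y"
    and w: "length w \<le> k"
  shows "cylinder_mass (Suc (Suc k)) \<psi> w = cylinder_mass (Suc (Suc k)) \<psi> (False # w)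
    + cylinder_mass (Suc (Suc k)) \<psi> (True # False # w) + cylinder_mass (Suc (Suc k)) \<psi> (True # True # w)"
proof -
  let ?P = "\<lambda>z. take (length w) z = w"
  have "cylinder_mass (k + 2) \<psi> w
      = (\<Sum>z\<in>words k. if ?P z then \<Sum>y\<in>words 2. (cmod (\<psi> (z @ y)))\<^sup>2 else 0)"
    using w by (rule cylinder_mass_append)
  also have "\<dots> = (\<Sum>z\<in>words k. (if ?P z then \<Sum>y\<in>words 1. (cmod (\<psi> (False # z @ y)))\<^sup>2 else 0)
      + (if ?P z then (cmod (\<psi> (True # False # z)))\<^sup>2 else 0)
      + (if ?P z then (cmod (\<psi> (True # True # z)))\<^sup>2 else 0))"
    using eigenvector_block_norm[OF assms(1) _ assms(2) eigen] by (intro sum.cong refl) simp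
  also have "\<dots> = cylinder_mass (k + 1) (\<lambda>z. \<psi> (False # z)) w
      + cylinder_mass k (\<lambda>z. \<psi> (True # False # z)) w + cylinder_mass k (\<lambda>z. \<psi> (True # True # z)) w"
    unfolding cylinder_mass_append[OF w] by (simp add: cylinder_mass_def sum.distrib)
  finally show ?thesis
    by (simp add: cylinder_mass_Cons)
qed

lemma cylinder_mass_Nil: "complex_of_real (cylinder_mass k v []) = inner_k k v v"
  unfolding cylinder_mass_def inner_k_def of_real_sum
  by (simp add: of_real_cmod_sq del: of_real_power)

lemma stationary_word_measure_mu_bar:
  assumes "2 \<le> k" and u: "unitary2 u" and norm: "inner_k k \<psi> \<psi> = 1" and "cmod \<omega> = 1"
    and eigen: "\<forall>y\<in>words k. app k (Uk k u) \<psi> y = \<omega> * \<psi> y"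
  shows "stationary_word_measure (k - 1) (mu_bar k u \<psi>)"
proof -
  obtain k2 where k: "k = Suc (Suc k2)"
    using assms(1) by (metis add_2_eq_Suc le_Suc_ex)
  define G where "G = 1 + cylinder_mass k \<psi> [True]"
  have "0 < G"
    using cylinder_mass_nonneg[of k \<psi> "[True]"] by (simp add: G_def)
  have mu: "mu_bar k u \<psi> w = (cylinder_mass k \<psi> w + cylinder_mass k \<psi> (True # w)) / G"
    if "length w \<le> k - 1" for w
    using mu_bar_eq[OF u that] k by (simp add: G_def)
  show ?thesis
  proof
    fix w :: "bool list"
    assume "length w \<le> k - 1"
    thus "0 \<le> mu_bar k u \<psi> w"
      using mu \<open>0 < G\<close> cylinder_mass_nonneg by simp
  next
    have "cylinder_mass k \<psi> [] = 1"
      using cylinder_mass_Nil[of k \<psi>] norm by simp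
    thus "mu_bar k u \<psi> [] = 1"
      using mu[of "[]"] \<open>0 < G\<close> by (simp add: G_def)
  next
    fix w :: "bool list"
    assume w: "length w < k - 1"
    thus "mu_bar k u \<psi> w = mu_bar k u \<psi> (w @ [False]) + mu_bar k u \<psi> (w @ [True])"
      using cylinder_mass_split[of w k \<psi>] cylinder_mass_split[of "True # w" k \<psi>]
      by (simp add: mu add_divide_distrib[symmetric])
  next
    fix w :: "bool list"
    assume w: "length w < k - 1"
    have "cylinder_mass k \<psi> w = cylinder_mass k \<psi> (False # w)
        + cylinder_mass k \<psi> (True # False # w) + cylinder_mass k \<psi> (True # True # w)"
      using cylinder_mass_eigenvector[OF u assms(4), where k=k2] eigen w unfolding k by simp
    thus "mu_bar k u \<psi> w = mu_bar k u \<psi> (False # w) + mu_bar k u \<psi> (True # w)"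
      using w by (simp add: mu add_divide_distrib[symmetric])
  qed
qed

theorem proposition9:
  fixes k n :: nat and u :: "bool \<Rightarrow> bool \<Rightarrow> complex" and \<psi> :: vec and \<theta> :: real
  assumes "k \<ge> 3"
    and "unitary2 u"
    and "\<forall>i j. cmod (u i j) = 1 / sqrt 2"
    and "inner_k k \<psi> \<psi> = 1"
    and "\<forall>y\<in>words k. app k (Uk k u) \<psi> y = exp (\<i> * complex_of_real \<theta>) * \<psi> y"
    and "1 \<le> n" and "n < k - 1"
  shows "entr (mu_bar k u \<psi>) n / real n
           \<ge> entr (mu_bar k u \<psi>) (k - 1) / real (k - 1) - real n * ln 2 / real (k - 1)"
proof -
  have "stationary_word_measure (k - 1) (mu_bar k u \<psi>)"
    using assms(1,2,4,5) by (intro stationary_word_measure_mu_bar) auto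
  thus ?thesis
    using assms(6,7) by (intro stationary_word_measure.entropy_rate_bound) auto
qed

end
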